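(* Let $n>2$ be a natural number and let $R$ be a de Groot continuum with two distinct points $b_1,b_2$. Let $Y_n=(\mathbb{Z}(n)\times R)/\rho$, where $\mathbb{Z}(n)=\mathbb{Z}/n\mathbb{Z}$ is discrete and $\rho$ is the equivalence relation whose only nontrivial identifications are $(k+n\mathbb{Z},b_2)\sim(k+1+n\mathbb{Z},b_1)$ for all $k\in\mathbb{Z}$. Then $Y_n$ is a continuum whose homeomorphism group $\mathcal{H}(Y_n)$ is isomorphic to the cyclic group $\mathbb{Z}/n\mathbb{Z}$; the isomorphism is given by letting $m\in\mathbb{Z}$ act via $\rho(k+n\mathbb{Z},x)\mapsto\rho(m+k+n\mathbb{Z},x)$.
   Context: A de Groot continuum (rigid continuum) is a compact connected metric space $R$ with more than one point such that every continuous map $R\to R$ is either the identity map or a constant map. $\mathcal{H}(Y)$ denotes the group of all homeomorphisms of a space $Y$ onto itself. The space $Y_n$ is the realisation of the directed $n$-cycle (Cayley graph of $(\mathbb{Z}(n),\{1+n\mathbb{Z}\})$) obtained by inserting a copy of $R$ into each oriented edge, $b_1$ glued to the origin and $b_2$ to the target. *)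

theory Defs
  imports "HOL-Analysis.Analysis" "HOL-Algebra.Elementary_Groups"
begin

definition de_Groot_continuum :: "'a::metric_space set \<Rightarrow> bool" where
  "de_Groot_continuum R \<longleftrightarrow>
     compact R \<and> connected R \<and> (\<exists>x\<in>R. \<exists>y\<in>R. x \<noteq> y) \<and>
     (\<forall>f. continuous_on R f \<and> f ` R \<subseteq> R \<longrightarrow>
          (\<forall>x\<in>R. f x = x) \<or> (\<exists>c. \<forall>x\<in>R. f x = c))"

definition continuum_space :: "'a topology \<Rightarrow> bool" where
  "continuum_space X \<longleftrightarrow>
     topspace X \<noteq> {} \<and> compact_space X \<and> connected_space X \<and> metrizable_space X"

definition quotient_topology :: "'a topology \<Rightarrow> ('a \<times> 'a) set \<Rightarrow> 'a set topology" where
  "quotient_topology X r =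
     topology (\<lambda>U. U \<subseteq> topspace X // r \<and> openin X (\<Union>U))"

text \<open>Z(n) x R with Z(n) = {0..<n} discrete (representatives of residues mod n).\<close>
definition ZR_space :: "nat \<Rightarrow> 'a::metric_space set \<Rightarrow> (int \<times> 'a) topology" where
  "ZR_space n R = prod_topology (discrete_topology {0..<int n}) (top_of_set R)"

definition rho :: "nat \<Rightarrow> 'a::metric_space set \<Rightarrow> 'a \<Rightarrow> 'a \<Rightarrow> ((int \<times> 'a) \<times> (int \<times> 'a)) set" where
  "rho n R b1 b2 =
     {(p, q). p \<in> {0..<int n} \<times> R \<and> q \<in> {0..<int n} \<times> R \<and>
       (p = q \<or>
        (\<exists>k. p = (k, b2) \<and> q = ((k + 1) mod int n, b1)) \<or>
        (\<exists>k. q = (k, b2) \<and> p = ((k + 1) mod int n, b1)))}"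

definition Y_space :: "nat \<Rightarrow> 'a::metric_space set \<Rightarrow> 'a \<Rightarrow> 'a \<Rightarrow> (int \<times> 'a) set topology" where
  "Y_space n R b1 b2 = quotient_topology (ZR_space n R) (rho n R b1 b2)"

definition homeo_group :: "'b topology \<Rightarrow> ('b \<Rightarrow> 'b) monoid" where
  "homeo_group Y =
     \<lparr>carrier = {h \<in> extensional (topspace Y). homeomorphic_map Y Y h},
      mult = (\<lambda>g h. compose (topspace Y) g h),
      one = (\<lambda>x \<in> topspace Y. x)\<rparr>"

definition Y_shift :: "nat \<Rightarrow> 'a::metric_space set \<Rightarrow> 'a \<Rightarrow> 'a \<Rightarrow> int \<Rightarrow> (int \<times> 'a) set \<Rightarrow> (int \<times> 'a) set" where
  "Y_shift n R b1 b2 m =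
     (\<lambda>c \<in> topspace (Y_space n R b1 b2). {((m + k) mod int n, x) | k x. (k, x) \<in> c})"

end

theory Submission
  imports Defs
begin

text \<open>
  Write \<open>[k,x]\<close> for the point of \<open>Y\<^sub>n\<close> represented by \<open>(k,x)\<close> and call
  \<open>arc k = {[k,x] | x \<in> R}\<close> the k-th arc; consecutive arcs meet in the vertex
  \<open>[k,b\<^sub>2] = [k+1,b\<^sub>1]\<close>, so \<open>Y\<^sub>n\<close> is a cycle of n copies of R.

  The key lemma says that a continuous injective image of R in \<open>Y\<^sub>n\<close> is
  either an arc or contains every vertex: once the image meets the interior of an arc
  without staying inside it, rigidity forces it to spill over into the next arc, and so
  on around the cycle.  Hence a homeomorphism maps arcs onto arcs, respecting the
  cyclic order, i.e. it is a shift \<open>[k,x] \<mapsto> [m+k,x]\<close>.  Conversely every shift is a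
  homeomorphism, and \<open>m \<mapsto> shift m\<close> is an injective homomorphism of \<open>\<int>/n\<int>\<close>.
\<close>

section \<open>A cone metric\<close>

text \<open>On \<open>'a \<times> real\<close> the distance below is a metric on the (open) cone over \<open>'a\<close> with one
  apex point \<open>(a,0)\<close>: as the height tends to 0 the base coordinate is forgotten.\<close>
definition cone_dist :: "('a::metric_space \<times> real) \<Rightarrow> ('a \<times> real) \<Rightarrow> real" where
  "cone_dist p q = \<bar>snd p - snd q\<bar> + min \<bar>snd p\<bar> \<bar>snd q\<bar> * min 1 (dist (fst p) (fst q))"

definition cone_carrier :: "'a \<Rightarrow> ('a \<times> real) set" where
  "cone_carrier a = {p. snd p > 0} \<union> {(a,0)}"

lemma cone_triangle_ineq:
  fixes s t u A B C :: real
  assumes "0 \<le> s" "0 \<le> t" "0 \<le> u" "0 \<le> A" "0 \<le> B" "0 \<le> C" "C \<le> 1" "C \<le> A + B"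
  shows "\<bar>s - u\<bar> + min s u * C \<le> (\<bar>s - t\<bar> + min s t * A) + (\<bar>t - u\<bar> + min t u * B)"
proof (cases "t \<ge> min s u")
  case True
  have "min s u * C \<le> min s u * A + min s u * B"
    using assms by (metis distrib_left min.cobounded1 min_def mult_left_mono order_trans)
  also have "\<dots> \<le> min s t * A + min t u * B"
    using True assms by (intro add_mono mult_right_mono) auto
  finally show ?thesis by linarith
next
  case False
  then have "(min s u - t) * C \<le> (min s u - t) * 1" using assms by (intro mult_left_mono) auto
  moreover have "t * C \<le> t * A + t * B" using assms by (metis distrib_left mult_left_mono)
  ultimately show ?thesis using False assms
    by (auto simp: min_def abs_if algebra_simps split: if_splits)
qed

lemma Metric_space_cone: "Metric_space (cone_carrier a) cone_dist"
proof
  fix x y :: "'a \<times> real"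
  show "0 \<le> cone_dist x y" unfolding cone_dist_def by simp
  show "cone_dist x y = cone_dist y x"
    unfolding cone_dist_def by (simp add: dist_commute min.commute abs_minus_commute)
next
  fix x y :: "'a \<times> real" assume "x \<in> cone_carrier a" "y \<in> cone_carrier a"
  then show "(cone_dist x y = 0) = (x = y)" unfolding cone_dist_def cone_carrier_def
    by (cases x; cases y) (auto simp: add_nonneg_eq_0_iff min_def split: if_splits)
next
  fix x y z :: "'a \<times> real"
  assume xyz: "x \<in> cone_carrier a" "y \<in> cone_carrier a" "z \<in> cone_carrier a"
  obtain x1 x2 y1 y2 z1 z2 where p: "x = (x1,x2)" "y = (y1,y2)" "z = (z1,z2)"
    by (metis prod.exhaust)
  have nn: "0 \<le> x2" "0 \<le> y2" "0 \<le> z2" using xyz p unfolding cone_carrier_def by auto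
  have truncated: "\<And>a b c::real. 0 \<le> a \<Longrightarrow> 0 \<le> b \<Longrightarrow> c \<le> a + b \<Longrightarrow> min 1 c \<le> min 1 a + min 1 b"
    by (auto simp: min_def)
  have "min 1 (dist x1 z1) \<le> min 1 (dist x1 y1) + min 1 (dist y1 z1)"
    by (rule truncated) (auto intro: dist_triangle)
  then show "cone_dist x z \<le> cone_dist x y + cone_dist y z"
    unfolding cone_dist_def p using cone_triangle_ineq[OF nn] nn by simp
qed

lemma cone_dist_lift_le:
  fixes w :: "'a::metric_space \<Rightarrow> real"
  assumes "0 \<le> w x" "0 \<le> w y"
  shows "cone_dist (if 0 < w x then (x, w x) else (a,0)) (if 0 < w y then (y, w y) else (a,0))
           \<le> \<bar>w x - w y\<bar> + w x * dist x y"
proof (cases "0 < w x \<and> 0 < w y")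
  case True
  have "min (w x) (w y) * min 1 (dist x y) \<le> w x * dist x y"
    using True by (intro mult_mono) auto
  then show ?thesis using True unfolding cone_dist_def by simp
qed (use assms in \<open>auto simp: cone_dist_def\<close>)

lemma continuous_map_cone_lift:
  fixes w :: "'a::metric_space \<Rightarrow> real"
  assumes wc: "continuous_on UNIV w" and wnn: "\<And>x. w x \<ge> 0"
  shows "continuous_map (top_of_set R) (Metric_space.mtopology (cone_carrier a) cone_dist)
           (\<lambda>x. if 0 < w x then (x, w x) else (a,0))"
proof -
  interpret M: Metric_space "cone_carrier a" cone_dist by (rule Metric_space_cone)
  let ?p = "\<lambda>x. if 0 < w x then (x, w x) else (a,0)"
  have inM: "?p x \<in> cone_carrier a" for x unfolding cone_carrier_def by auto
  show ?thesis unfolding M.continuous_map_to_metric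
  proof (intro ballI allI impI)
    fix x0 and \<epsilon> :: real assume x0: "x0 \<in> topspace (top_of_set R)" and ep: "0 < \<epsilon>"
    obtain \<delta>1 where d1: "\<delta>1 > 0" "\<And>y. dist y x0 < \<delta>1 \<Longrightarrow> dist (w y) (w x0) < \<epsilon>/2"
      using wc ep unfolding continuous_on_iff by (metis UNIV_I half_gt_zero)
    define \<delta> where "\<delta> = min \<delta>1 (\<epsilon> / (2 * (1 + w x0)))"
    have d: "0 < \<delta>" using d1 ep wnn[of x0] unfolding \<delta>_def by auto
    have "?p y \<in> M.mball (?p x0) \<epsilon>" if y: "y \<in> R \<inter> ball x0 \<delta>" for y
    proof -
      have "\<bar>w x0 - w y\<bar> < \<epsilon>/2"
        using d1(2)[of y] y unfolding \<delta>_def by (auto simp: dist_real_def dist_commute abs_minus_commute)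
      moreover have "w x0 * dist x0 y \<le> w x0 * (\<epsilon> / (2 * (1 + w x0)))"
        using y wnn[of x0] unfolding \<delta>_def by (intro mult_left_mono) auto
      moreover have "w x0 * (\<epsilon> / (2 * (1 + w x0))) \<le> \<epsilon>/2"
        using wnn[of x0] ep by (simp add: field_simps)
      ultimately have "cone_dist (?p x0) (?p y) < \<epsilon>"
        using cone_dist_lift_le[of w x0 y a, OF wnn wnn] by linarith
      then show ?thesis using inM by simp
    qed
    then show "\<exists>U. openin (top_of_set R) U \<and> x0 \<in> U \<and> (\<forall>y\<in>U. ?p y \<in> M.mball (?p x0) \<epsilon>)"
      using x0 d by (intro exI[of _ "R \<inter> ball x0 \<delta>"]) auto
  qed
qed

section \<open>Quotient topology of an equivalence relation\<close>

lemma class_mem_iff_mem_Union: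
  assumes r: "equiv A r" and U: "U \<subseteq> A//r" and p: "p \<in> A"
  shows "r``{p} \<in> U \<longleftrightarrow> p \<in> \<Union>U"
proof
  assume "r``{p} \<in> U" then show "p \<in> \<Union>U" using equiv_class_self[OF r p] by blast
next
  assume "p \<in> \<Union>U"
  then obtain c where c: "c \<in> U" "p \<in> c" by blast
  then obtain p' where p': "c = r``{p'}" using U by (auto elim: quotientE)
  then have "(p', p) \<in> r" using c by simp
  then have "r``{p'} = r``{p}" by (rule equiv_class_eq[OF r])
  then show "r``{p} \<in> U" using c p' by simp
qed

lemma istopology_quotient:
  assumes r: "equiv (topspace X) r"
  shows "istopology (\<lambda>U. U \<subseteq> topspace X // r \<and> openin X (\<Union>U))"
  unfolding istopology_def
proof (rule conjI; intro allI impI)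
  fix U V assume U: "U \<subseteq> topspace X // r \<and> openin X (\<Union>U)"
    and V: "V \<subseteq> topspace X // r \<and> openin X (\<Union>V)"
  have "\<Union>U \<inter> \<Union>V \<subseteq> \<Union>(U \<inter> V)"
  proof
    fix p assume p: "p \<in> \<Union>U \<inter> \<Union>V"
    then have "p \<in> topspace X" using U Union_quotient[OF r] by blast
    then have "r``{p} \<in> U \<inter> V" "p \<in> r``{p}"
      using p U V class_mem_iff_mem_Union[OF r] equiv_class_self[OF r] by auto
    then show "p \<in> \<Union>(U \<inter> V)" by blast
  qed
  then have "\<Union>(U \<inter> V) = \<Union>U \<inter> \<Union>V" by blast
  then show "U \<inter> V \<subseteq> topspace X // r \<and> openin X (\<Union>(U \<inter> V))" using U V by auto
next
  fix K assume "\<forall>U\<in>K. U \<subseteq> topspace X // r \<and> openin X (\<Union>U)"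
  moreover have "\<Union>(\<Union>K) = \<Union>(Union ` K)" by blast
  ultimately show "\<Union>K \<subseteq> topspace X // r \<and> openin X (\<Union>(\<Union>K))" by auto
qed

lemma openin_quotient_topology:
  "equiv (topspace X) r \<Longrightarrow>
     openin (quotient_topology X r) U \<longleftrightarrow> U \<subseteq> topspace X // r \<and> openin X (\<Union>U)"
  unfolding quotient_topology_def by (simp add: istopology_quotient)

lemma topspace_quotient_topology:
  assumes "equiv (topspace X) r"
  shows "topspace (quotient_topology X r) = topspace X // r"
proof -
  have "openin (quotient_topology X r) (topspace X // r)"
    using assms by (simp add: openin_quotient_topology Union_quotient)
  then show ?thesis
    using openin_quotient_topology[OF assms] by (metis openin_subset openin_topspace subset_antisym)
qed

lemma quotient_map_quotient_topology:
  assumes "equiv (topspace X) r"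
  shows "quotient_map X (quotient_topology X r) (\<lambda>x. r``{x})"
  unfolding quotient_map_def topspace_quotient_topology[OF assms]
proof (intro conjI allI impI)
  show "(\<lambda>x. r``{x}) ` topspace X = topspace X // r" by (auto simp: quotient_def)
  fix U assume U: "U \<subseteq> topspace X // r"
  have "\<Union>U \<subseteq> topspace X" using U Union_quotient[OF assms] by blast
  then have "{x \<in> topspace X. r``{x} \<in> U} = \<Union>U"
    using class_mem_iff_mem_Union[OF assms U] by blast
  then show "openin X {x \<in> topspace X. r``{x} \<in> U} \<longleftrightarrow> openin (quotient_topology X r) U"
    using U by (simp add: openin_quotient_topology[OF assms])
qed

lemma continuous_map_from_discrete_prod:
  assumes "\<And>k. k \<in> I \<Longrightarrow> continuous_map X T (\<lambda>x. F (k,x))"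
  shows "continuous_map (prod_topology (discrete_topology I) X) T F"
  unfolding continuous_map_def
proof (intro conjI allI impI)
  show "F \<in> topspace (prod_topology (discrete_topology I) X) \<rightarrow> topspace T"
    using assms by (fastforce simp: continuous_map_def Pi_iff)
  fix V assume V: "openin T V"
  have "{p \<in> topspace (prod_topology (discrete_topology I) X). F p \<in> V}
        = (\<Union>k\<in>I. {k} \<times> {x \<in> topspace X. F (k,x) \<in> V})" by auto
  moreover have "openin (prod_topology (discrete_topology I) X) ({k} \<times> {x \<in> topspace X. F (k,x) \<in> V})"
    if "k \<in> I" for k
    using assms[OF that] V that by (simp add: openin_prod_Times_iff continuous_map_def)
  ultimately show "openin (prod_topology (discrete_topology I) X)
      {p \<in> topspace (prod_topology (discrete_topology I) X). F p \<in> V}" by auto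
qed

lemma continuous_map_collapse_closed:
  assumes A: "closedin Y A" and B: "closedin Y B" and K: "K \<subseteq> A \<union> B" "K \<subseteq> topspace Y"
    and overlap: "\<And>c. c \<in> K \<Longrightarrow> c \<in> A \<Longrightarrow> c \<in> B \<Longrightarrow> c = a0" and a0: "a0 \<in> topspace Y"
  shows "continuous_map (subtopology Y K) Y (\<lambda>c. if c \<in> A then c else a0)"
  unfolding continuous_map_closedin
proof (intro conjI allI impI)
  have tK: "topspace (subtopology Y K) = K" using K by auto
  show "(\<lambda>c. if c \<in> A then c else a0) \<in> topspace (subtopology Y K) \<rightarrow> topspace Y"
    using tK K a0 by auto
  fix F assume F: "closedin Y F"
  have eq: "{x \<in> topspace (subtopology Y K). (if x \<in> A then x else a0) \<in> F}
      = K \<inter> (A \<inter> F \<union> (if a0 \<in> F then B else {}))"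
    using tK K overlap by auto
  have "closedin Y (A \<inter> F \<union> (if a0 \<in> F then B else {}))" using A B F by auto
  then show "closedin (subtopology Y K) {x \<in> topspace (subtopology Y K). (if x \<in> A then x else a0) \<in> F}"
    unfolding eq by (rule closedin_subtopology_Int_closed)
qed

text \<open>A compact space mapped continuously and injectively into a metrizable space is
  metrizable: the map is an embedding.\<close>
lemma metrizable_space_injective_map:
  assumes f: "continuous_map X Z f" "inj_on f (topspace X)"
    and X: "compact_space X" and Z: "metrizable_space Z"
  shows "metrizable_space X"
proof -
  have "embedding_map X Z f"
    using continuous_imp_embedding_map[OF f(1) X metrizable_imp_Hausdorff_space[OF Z] f(2)] .
  then have "X homeomorphic_space subtopology Z (f ` topspace X)"
    by (rule embedding_map_imp_homeomorphic_space)
  moreover have "metrizable_space (subtopology Z (f ` topspace X))"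
    using Z by (rule metrizable_space_subtopology)
  ultimately show ?thesis using homeomorphic_metrizable_space by blast
qed

section \<open>De Groot continua\<close>

lemma de_Groot_infinite: "de_Groot_continuum R \<Longrightarrow> infinite R"
  unfolding de_Groot_continuum_def using connected_finite_iff_sing by fastforce

lemma de_Groot_rigid:
  assumes "de_Groot_continuum R" "continuous_map (top_of_set R) (top_of_set R) g"
    and "x \<in> R" "y \<in> R" "g x \<noteq> g y"
  shows "\<forall>z\<in>R. g z = z"
proof -
  have "continuous_on R g" "g ` R \<subseteq> R" using assms(2) by auto
  then show ?thesis using assms unfolding de_Groot_continuum_def by metis
qed

lemma de_Groot_map_into_copy:
  assumes R: "de_Groot_continuum R" and Y: "Hausdorff_space Y"
    and e: "continuous_map (top_of_set R) Y e" "inj_on e R"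
    and g: "continuous_map (top_of_set R) Y g" "g ` R \<subseteq> e ` R"
    and ab: "a \<in> R" "b \<in> R" "g a \<noteq> g b"
  shows "\<forall>t\<in>R. g t = e t"
proof -
  let ?e' = "inv_into R e"
  have cs: "compact_space (top_of_set R)"
    using R unfolding de_Groot_continuum_def by (simp add: compact_space_subtopology)
  have inv: "continuous_map (subtopology Y (e ` R)) (top_of_set R) ?e'"
    by (rule continuous_inverse_map[OF cs Y e(1)]) (use e(2) in auto)
  have "continuous_map (top_of_set R) (subtopology Y (e ` R)) g"
    using g by (intro continuous_map_into_subtopology) (auto simp: Pi_iff)
  then have G: "continuous_map (top_of_set R) (top_of_set R) (?e' \<circ> g)"
    using continuous_map_compose inv by blast
  have e_inv: "\<And>c. c \<in> e ` R \<Longrightarrow> e (?e' c) = c" by (simp add: f_inv_into_f)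
  have ga: "g a \<in> e ` R" and gb: "g b \<in> e ` R" using g(2) ab by auto
  have "(?e' \<circ> g) a \<noteq> (?e' \<circ> g) b" using e_inv[OF ga] e_inv[OF gb] ab(3) by auto
  then have id: "\<forall>z\<in>R. ?e' (g z) = z" using de_Groot_rigid[OF R G ab(1,2)] by simp
  show ?thesis
  proof
    fix t assume t: "t \<in> R"
    then have "g t \<in> e ` R" using g(2) by auto
    then show "g t = e t" using e_inv id t by metis
  qed
qed

section \<open>The space \<open>Y\<^sub>n\<close>\<close>

locale cycle_space =
  fixes n :: nat and R :: "'a::metric_space set" and b1 b2 :: 'a
  assumes n2: "n > 2" and dG: "de_Groot_continuum R"
    and b1R: "b1 \<in> R" and b2R: "b2 \<in> R" and b12: "b1 \<noteq> b2"
begin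

abbreviation "Zn \<equiv> {0..<int n}"
abbreviation "S \<equiv> Zn \<times> R"
abbreviation "rh \<equiv> rho n R b1 b2"
abbreviation "ZR \<equiv> ZR_space n R"
abbreviation "Y \<equiv> Y_space n R b1 b2"
abbreviation "shift \<equiv> Y_shift n R b1 b2"

abbreviation nxt :: "int \<Rightarrow> int" where "nxt k \<equiv> (k + 1) mod int n"

definition pt :: "int \<Rightarrow> 'a \<Rightarrow> (int \<times> 'a) set" where "pt k x = rh `` {(k,x)}"

lemma nxt_eq: "k \<in> Zn \<Longrightarrow> nxt k = (if k + 1 = int n then 0 else k + 1)"
  by (auto simp: mod_pos_pos_trivial)

lemma nxt_in: "k \<in> Zn \<Longrightarrow> nxt k \<in> Zn"
  using n2 by auto

lemma nxt_eq_iff: "k \<in> Zn \<Longrightarrow> j \<in> Zn \<Longrightarrow> nxt k = nxt j \<longleftrightarrow> k = j"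
  by (auto simp: nxt_eq split: if_splits)

text \<open>Here \<open>n > 2\<close> is used: a point is neither its own successor nor its second successor.\<close>
lemma nxt_ne: "k \<in> Zn \<Longrightarrow> nxt k \<noteq> k" and nxt_nxt_ne: "k \<in> Zn \<Longrightarrow> nxt (nxt k) \<noteq> k"
  using n2 by (auto simp: nxt_eq)

lemma nxt_iff_pred:
  assumes "k \<in> Zn" "k' \<in> Zn" shows "nxt k' = k \<longleftrightarrow> k' = (k - 1) mod int n"
proof
  assume "nxt k' = k"
  then have "(k - 1) mod int n = (nxt k' - 1) mod int n" by simp
  also have "\<dots> = (k' + 1 - 1) mod int n" by (rule mod_diff_left_eq)
  also have "\<dots> = k'" using assms by simp
  finally show "k' = (k - 1) mod int n" by simp
next
  assume "k' = (k - 1) mod int n"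
  then show "nxt k' = k" using assms by (simp add: mod_add_left_eq)
qed

lemma commutes_nxt_imp_translation:
  assumes \<sigma>: "\<And>k. k \<in> Zn \<Longrightarrow> \<sigma> k \<in> Zn" and comm: "\<And>k. k \<in> Zn \<Longrightarrow> \<sigma> (nxt k) = nxt (\<sigma> k)"
    and k: "k \<in> Zn"
  shows "\<sigma> k = (\<sigma> 0 + k) mod int n"
proof -
  have "m < n \<Longrightarrow> \<sigma> (int m) = (\<sigma> 0 + int m) mod int n" for m
  proof (induction m)
    case 0 then show ?case using \<sigma>[of 0] n2 by simp
  next
    case (Suc m)
    then have m: "int m \<in> Zn" "nxt (int m) = int (Suc m)" by auto
    have "\<sigma> (int (Suc m)) = nxt ((\<sigma> 0 + int m) mod int n)" using comm[OF m(1)] m(2) Suc by simp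
    also have "\<dots> = (\<sigma> 0 + int (Suc m)) mod int n" unfolding mod_add_left_eq by (simp add: algebra_simps)
    finally show ?case .
  qed
  from this[of "nat k"] show ?thesis using k by auto
qed

lemma mem_rh: "(p,q) \<in> rh \<longleftrightarrow> p \<in> S \<and> q \<in> S \<and>
   (p = q \<or> (\<exists>k. p = (k, b2) \<and> q = (nxt k, b1)) \<or> (\<exists>k. q = (k, b2) \<and> p = (nxt k, b1)))"
  unfolding rho_def by auto

lemma equiv_rh: "equiv S rh"
proof (rule equivI)
  show "rh \<subseteq> S \<times> S" "refl_on S rh" "sym rh"
    unfolding rho_def refl_on_def sym_def by auto
  show "trans rh"
    unfolding trans_def mem_rh using b12 by (auto simp: nxt_eq_iff)
qed

lemma topspace_ZR [simp]: "topspace ZR = S"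
  by (simp add: ZR_space_def)

lemma quotient_map_pt: "quotient_map ZR Y (\<lambda>p. rh``{p})"
  unfolding Y_space_def using quotient_map_quotient_topology[of ZR rh] equiv_rh by simp

lemma topspace_Y: "topspace Y = S // rh"
  unfolding Y_space_def using topspace_quotient_topology[of ZR rh] equiv_rh by simp

lemma topspace_Y_iff: "c \<in> topspace Y \<longleftrightarrow> (\<exists>k\<in>Zn. \<exists>x\<in>R. c = pt k x)"
  unfolding topspace_Y quotient_def pt_def by auto

lemma pt_in: "k \<in> Zn \<Longrightarrow> x \<in> R \<Longrightarrow> pt k x \<in> topspace Y"
  using topspace_Y_iff by blast

lemma pt_eq_iff:
  assumes "j \<in> Zn" "i \<in> Zn" "x \<in> R" "y \<in> R"
  shows "pt j x = pt i y \<longleftrightarrow> (j = i \<and> x = y) \<or> (x = b2 \<and> y = b1 \<and> i = nxt j)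
          \<or> (x = b1 \<and> y = b2 \<and> j = nxt i)"
  unfolding pt_def using eq_equiv_class_iff[OF equiv_rh, of "(j,x)" "(i,y)"] assms
  by (auto simp: mem_rh)

lemma pt_inj: "k \<in> Zn \<Longrightarrow> x \<in> R \<Longrightarrow> y \<in> R \<Longrightarrow> pt k x = pt k y \<longleftrightarrow> x = y"
  using pt_eq_iff[of k k x y] nxt_ne[of k] b12 by auto

lemma vertex_inj: "i \<in> Zn \<Longrightarrow> i' \<in> Zn \<Longrightarrow> pt i b2 = pt i' b2 \<longleftrightarrow> i = i'"
  using pt_eq_iff[of i i' b2 b2] b2R b12 by auto

lemma pt_b2: "k \<in> Zn \<Longrightarrow> pt (nxt k) b1 = pt k b2"
  using pt_eq_iff[of k "nxt k" b2 b1] nxt_in b1R b2R by auto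

lemma pt_b1: "k \<in> Zn \<Longrightarrow> pt k b1 = pt ((k - 1) mod int n) b2"
  using pt_b2[of "(k - 1) mod int n"] nxt_iff_pred[of k "(k - 1) mod int n"] n2 by auto

lemma endpoint_is_vertex:
  assumes "k \<in> Zn" "x = b1 \<or> x = b2"
  shows "\<exists>k'\<in>Zn. pt k x = pt k' b2"
proof (cases "x = b2")
  case False
  then have "pt k x = pt ((k - 1) mod int n) b2" using assms pt_b1 by auto
  then show ?thesis using n2 by (intro bexI[of _ "(k - 1) mod int n"]) auto
qed (use assms in blast)

lemma continuous_map_from_Y:
  assumes "\<And>k. k \<in> Zn \<Longrightarrow> continuous_map (top_of_set R) T (\<lambda>x. g (pt k x))"
  shows "continuous_map Y T g"
proof (rule continuous_compose_quotient_map[OF quotient_map_pt])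
  show "continuous_map ZR T (g \<circ> (\<lambda>p. rh``{p}))"
    unfolding ZR_space_def using assms
    by (intro continuous_map_from_discrete_prod) (simp add: pt_def)
qed

lemma continuous_map_pt: "k \<in> Zn \<Longrightarrow> continuous_map (top_of_set R) Y (pt k)"
proof -
  assume k: "k \<in> Zn"
  have "continuous_map (top_of_set R) ZR (\<lambda>x. (k,x))"
    unfolding ZR_space_def continuous_map_pairwise o_def using k by auto
  then have "continuous_map (top_of_set R) Y ((\<lambda>p. rh``{p}) \<circ> (\<lambda>x. (k,x)))"
    using quotient_imp_continuous_map[OF quotient_map_pt] continuous_map_compose by blast
  then show ?thesis by (simp add: o_def pt_def[abs_def])
qed

lemma R_compact_space: "compact_space (top_of_set R)"
  using dG unfolding de_Groot_continuum_def by (simp add: compact_space_subtopology)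

lemma R_connected_space: "connected_space (top_of_set R)"
  using dG unfolding de_Groot_continuum_def by (simp add: connected_space_subtopology)

definition arc :: "int \<Rightarrow> (int \<times> 'a) set set" where "arc k = pt k ` R"

definition arc_interior :: "int \<Rightarrow> (int \<times> 'a) set set" where
  "arc_interior k = pt k ` (R - {b1, b2})"

lemma Union_arc: "(\<Union>k\<in>Zn. arc k) = topspace Y"
  unfolding arc_def using topspace_Y_iff by blast

lemma connectedin_arc: "k \<in> Zn \<Longrightarrow> connectedin Y (arc k)"
  unfolding arc_def using connectedin_continuous_map_image[OF continuous_map_pt] R_connected_space
  by (metis connectedin_topspace topspace_euclidean_subtopology)

text \<open>The first arcs form a connected chain, since consecutive arcs share a vertex.\<close>
lemma connectedin_arc_chain: "m < n \<Longrightarrow> connectedin Y (\<Union>k\<in>{0..int m}. arc k)"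
proof (induction m)
  case 0 then show ?case using connectedin_arc by simp
next
  case (Suc m)
  have m: "int m \<in> Zn" "nxt (int m) = int (Suc m)" using Suc by auto
  have "pt (int m) b2 \<in> arc (int (Suc m)) \<inter> (\<Union>k\<in>{0..int m}. arc k)"
    using b1R b2R pt_b2[OF m(1)] m(2) unfolding arc_def by force
  moreover have "{0..int (Suc m)} = insert (int (Suc m)) {0..int m}" by auto
  ultimately show ?case
    using Suc connectedin_Un[OF connectedin_arc[of "int (Suc m)"] Suc.IH] by auto
qed

lemma compact_space_Y: "compact_space Y"
proof -
  have "compact_space ZR" unfolding ZR_space_def
    using R_compact_space by (simp add: compact_space_prod_topology compact_space_discrete_topology)
  then have "compactin Y ((\<lambda>p. rh``{p}) ` topspace ZR)"
    using image_compactin quotient_imp_continuous_map[OF quotient_map_pt] compact_space_def by blast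
  then show ?thesis
    unfolding compact_space_def using quotient_imp_surjective_map[OF quotient_map_pt] by simp
qed

lemma connected_space_Y: "connected_space Y"
proof -
  have "{0..int (n-1)} = Zn" using n2 by auto
  then have "connectedin Y (\<Union>k\<in>Zn. arc k)" using connectedin_arc_chain[of "n-1"] n2 by auto
  then show ?thesis by (metis Union_arc connectedin_topspace)
qed

subsection \<open>Metrizability\<close>

text \<open>\<open>Y\<^sub>n\<close> embeds into a product, indexed by the arcs, of copies of (cone \<times> \<real>).  On arc j
  the cone coordinate lifts \<open>x\<close> to the height \<open>gap x\<close> (so both endpoints go to the apex) and
  the real "tent" coordinates locate the vertices.\<close>
definition gap :: "'a \<Rightarrow> real" where "gap x = min (dist x b1) (dist x b2)"

definition frac :: "'a \<Rightarrow> real" where "frac x = dist x b1 / (dist x b1 + dist x b2)"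

definition cone_pt :: "'a \<Rightarrow> 'a \<times> real" where
  "cone_pt x = (if 0 < gap x then (x, gap x) else (b1, 0))"

definition tent :: "int \<Rightarrow> int \<times> 'a \<Rightarrow> real" where
  "tent j p = (if fst p = j then frac (snd p) else if fst p = nxt j then 1 - frac (snd p) else 0)"

definition embed0 :: "int \<times> 'a \<Rightarrow> int \<Rightarrow> ('a \<times> real) \<times> real" where
  "embed0 p = (\<lambda>j\<in>Zn. (if fst p = j then cone_pt (snd p) else (b1, 0), tent j p))"

definition embed :: "(int \<times> 'a) set \<Rightarrow> int \<Rightarrow> ('a \<times> real) \<times> real" where
  "embed c = embed0 (SOME p. p \<in> c)"

abbreviation "Cone \<equiv> Metric_space.mtopology (cone_carrier b1) cone_dist"
abbreviation "Target \<equiv> product_topology (\<lambda>j. prod_topology Cone euclideanreal) Zn"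

lemma gap_pos: "0 < gap x \<longleftrightarrow> x \<noteq> b1 \<and> x \<noteq> b2"
  unfolding gap_def by auto

lemma frac_b: "frac b1 = 0" "frac b2 = 1"
  unfolding frac_def using b12 by (auto simp: dist_commute)

lemma cone_pt_b: "cone_pt b1 = (b1, 0)" "cone_pt b2 = (b1, 0)"
  unfolding cone_pt_def using gap_pos by auto

lemma embed0_apply: "j \<in> Zn \<Longrightarrow> embed0 (k,x) j = (if k = j then cone_pt x else (b1,0), tent j (k,x))"
  by (simp add: embed0_def)

lemma embed0_respects: assumes "(p,q) \<in> rh" shows "embed0 p = embed0 q"
proof -
  have "embed0 (k, b2) = embed0 (nxt k, b1)" if k: "k \<in> Zn" for k
  proof -
    have "tent j (k, b2) = tent j (nxt k, b1)" if j: "j \<in> Zn" for j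
      unfolding tent_def using frac_b nxt_eq_iff[OF k j] nxt_ne[OF j] by auto
    then show ?thesis unfolding embed0_def using cone_pt_b by (simp add: restrict_def fun_eq_iff)
  qed
  moreover have "p = q \<or> (\<exists>k\<in>Zn. p = (k, b2) \<and> q = (nxt k, b1) \<or> q = (k, b2) \<and> p = (nxt k, b1))"
    using assms unfolding mem_rh by auto
  ultimately show ?thesis by metis
qed

lemma embed_pt: "k \<in> Zn \<Longrightarrow> x \<in> R \<Longrightarrow> embed (pt k x) = embed0 (k,x)"
proof -
  assume "k \<in> Zn" "x \<in> R"
  then have "(k,x) \<in> pt k x" unfolding pt_def by (simp add: mem_rh)
  then have "(SOME q. q \<in> pt k x) \<in> pt k x" by (rule someI)
  then have "((k,x), SOME q. q \<in> pt k x) \<in> rh" unfolding pt_def by simp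
  from embed0_respects[OF this] show ?thesis unfolding embed_def by simp
qed

text \<open>Injectivity: interior points are recovered from the cone coordinate, vertices from the
  tent coordinates.\<close>
lemma embed0_inj:
  assumes k: "k \<in> Zn" and j: "j \<in> Zn" and x: "x \<in> R" and y: "y \<in> R"
    and eq: "embed0 (k,x) = embed0 (j,y)"
  shows "pt k x = pt j y"
proof (cases "x \<noteq> b1 \<and> x \<noteq> b2")
  case True
  have "embed0 (k,x) k = embed0 (j,y) k" using eq by simp
  then have "cone_pt x = (if j = k then cone_pt y else (b1,0))" using k by (simp add: embed0_apply)
  then show ?thesis using True gap_pos unfolding cone_pt_def by (auto split: if_splits)
next
  case x_end: False
  show ?thesis
  proof (cases "y \<noteq> b1 \<and> y \<noteq> b2")
    case True
    have "embed0 (k,x) j = embed0 (j,y) j" using eq by simp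
    then have "(if k = j then cone_pt x else (b1,0)) = cone_pt y" using j by (simp add: embed0_apply)
    then show ?thesis using True gap_pos unfolding cone_pt_def by (auto split: if_splits)
  next
    case False
    obtain k' where k': "k' \<in> Zn" "pt k x = pt k' b2" using endpoint_is_vertex[OF k, of x] x_end by blast
    obtain j' where j': "j' \<in> Zn" "pt j y = pt j' b2" using endpoint_is_vertex[OF j, of y] False by blast
    have "embed0 (k',b2) = embed0 (j',b2)"
      using embed_pt[OF k x] embed_pt[OF j y] embed_pt[OF k'(1) b2R] embed_pt[OF j'(1) b2R] k' j' eq
      by simp
    then have "embed0 (k',b2) k' = embed0 (j',b2) k'" by simp
    then have "tent k' (k',b2) = tent k' (j',b2)" using k'(1) by (simp add: embed0_apply)
    then have "j' = k'" unfolding tent_def using frac_b by (auto split: if_splits)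
    then show ?thesis using k' j' by simp
  qed
qed

lemma continuous_map_embed: "continuous_map Y Target embed"
proof (rule continuous_map_from_Y)
  interpret Cone: Metric_space "cone_carrier b1" cone_dist by (rule Metric_space_cone)
  fix k assume k: "k \<in> Zn"
  have frac_cont: "continuous_on R frac"
  proof -
    have "dist x b1 + dist x b2 \<noteq> 0" for x
      using b12 by (metis add_nonneg_eq_0_iff dist_eq_0_iff zero_le_dist)
    then show ?thesis unfolding frac_def by (intro continuous_intros) auto
  qed
  have cone_pt_cont: "continuous_map (top_of_set R) Cone cone_pt"
    using continuous_map_cone_lift[of gap R b1] unfolding cone_pt_def[abs_def] gap_def
    by (simp add: continuous_intros)
  have apex: "(b1,0) \<in> topspace Cone" using Cone.topspace_mtopology by (simp add: cone_carrier_def)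
  have "continuous_map (top_of_set R) Target (\<lambda>x. embed0 (k, x))"
    unfolding continuous_map_componentwise
  proof (intro conjI ballI)
    show "(\<lambda>x. embed0 (k, x)) ` topspace (top_of_set R) \<subseteq> extensional Zn"
      unfolding embed0_def by auto
    fix j assume j: "j \<in> Zn"
    have "continuous_map (top_of_set R) Cone (\<lambda>x. if k = j then cone_pt x else (b1,0))"
      using cone_pt_cont apex by auto
    moreover have "continuous_on R (\<lambda>x. tent j (k,x))"
      unfolding tent_def fst_conv snd_conv using frac_cont
      by (cases "k = j"; cases "k = nxt j") (auto intro: continuous_intros)
    ultimately show "continuous_map (top_of_set R) (prod_topology Cone euclideanreal) (\<lambda>x. embed0 (k, x) j)"
      unfolding continuous_map_pairwise o_def embed0_apply[OF j] by simp
  qed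
  then show "continuous_map (top_of_set R) Target (\<lambda>x. embed (pt k x))"
    by (rule continuous_map_eq) (simp add: embed_pt[OF k])
qed

lemma metrizable_Target: "metrizable_space Target"
proof -
  interpret Cone: Metric_space "cone_carrier b1" cone_dist by (rule Metric_space_cone)
  have "metrizable_space (prod_topology Cone euclideanreal)"
    using Cone.metrizable_space_mtopology metrizable_space_euclidean[where 'a=real]
    by (simp add: metrizable_space_prod_topology)
  then show ?thesis by (simp add: metrizable_space_product_topology)
qed

lemma inj_embed: "inj_on embed (topspace Y)"
proof
  fix c c' assume c: "c \<in> topspace Y" and c': "c' \<in> topspace Y" and eq: "embed c = embed c'"
  obtain k x where kx: "k \<in> Zn" "x \<in> R" "c = pt k x" using c topspace_Y_iff by blast
  obtain j y where jy: "j \<in> Zn" "y \<in> R" "c' = pt j y" using c' topspace_Y_iff by blast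
  show "c = c'" using embed0_inj[OF kx(1) jy(1) kx(2) jy(2)] eq embed_pt kx jy by simp
qed

lemma metrizable_space_Y: "metrizable_space Y"
  by (rule metrizable_space_injective_map[OF continuous_map_embed inj_embed compact_space_Y
        metrizable_Target])

lemma Hausdorff_space_Y: "Hausdorff_space Y"
  by (rule metrizable_imp_Hausdorff_space[OF metrizable_space_Y])

lemma continuum_space_Y: "continuum_space Y"
  unfolding continuum_space_def using pt_in[of 0 b1] n2 b1R compact_space_Y connected_space_Y
    metrizable_space_Y by auto

subsection \<open>Continuous injective images of R in \<open>Y\<^sub>n\<close>\<close>

text \<open>Arcs are compact, hence closed in the Hausdorff space \<open>Y\<^sub>n\<close>.\<close>
lemma closedin_arc: "k \<in> Zn \<Longrightarrow> closedin Y (arc k)"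
  unfolding arc_def
  using image_compactin[OF _ continuous_map_pt] R_compact_space compact_space_def
    compactin_imp_closedin[OF Hausdorff_space_Y]
  by (metis topspace_euclidean_subtopology)

lemma closedin_Union_arcs: "J \<subseteq> Zn \<Longrightarrow> closedin Y (\<Union>i\<in>J. arc i)"
  by (intro closedin_Union) (auto intro: closedin_arc finite_subset)

lemma arc_interior_subset: "arc_interior k \<subseteq> arc k"
  unfolding arc_interior_def arc_def by auto

lemma arc_interior_not_endpoint: "j \<in> Zn \<Longrightarrow> c \<in> arc_interior j \<Longrightarrow> c \<noteq> pt j b1 \<and> c \<noteq> pt j b2"
  unfolding arc_interior_def using pt_inj b1R b2R by auto

lemma arc_interior_disjoint: "j \<in> Zn \<Longrightarrow> i \<in> Zn \<Longrightarrow> i \<noteq> j \<Longrightarrow> arc_interior j \<inter> arc i = {}"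
  unfolding arc_interior_def arc_def using pt_eq_iff by auto

definition other_arcs :: "int \<Rightarrow> (int \<times> 'a) set set" where
  "other_arcs j = (\<Union>i\<in>Zn - {j}. arc i)"

definition far_arcs :: "int \<Rightarrow> (int \<times> 'a) set set" where
  "far_arcs j = (\<Union>i\<in>Zn - {j, nxt j}. arc i)"

lemma arc_inter_other_arcs: "j \<in> Zn \<Longrightarrow> c \<in> arc j \<Longrightarrow> c \<in> other_arcs j \<Longrightarrow> c = pt j b1 \<or> c = pt j b2"
  unfolding arc_def other_arcs_def using pt_eq_iff by blast

lemma arc_inter_far_arcs: "j \<in> Zn \<Longrightarrow> c \<in> arc j \<Longrightarrow> c \<in> far_arcs j \<Longrightarrow> c = pt j b1"
  unfolding arc_def far_arcs_def using pt_eq_iff by blast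

lemma subset_arc_far_arcs:
  assumes j: "j \<in> Zn" and K: "K \<subseteq> topspace Y" and miss: "K \<inter> arc_interior (nxt j) = {}"
  shows "K \<subseteq> arc j \<union> far_arcs j"
proof
  fix c assume c: "c \<in> K"
  then obtain i x where ix: "i \<in> Zn" "x \<in> R" "c = pt i x" using K topspace_Y_iff by blast
  show "c \<in> arc j \<union> far_arcs j"
  proof (cases "i = nxt j")
    case False
    then show ?thesis unfolding arc_def far_arcs_def using ix by blast
  next
    case i: True
    consider "x = b1" | "x = b2" | "x \<in> R - {b1, b2}" using ix by blast
    then show ?thesis
    proof cases
      case 1
      then have "c = pt j b2" using ix i pt_b2[OF j] by simp
      then show ?thesis unfolding arc_def using b2R by blast
    next
      case 2
      then have "c = pt (nxt i) b1" using ix pt_b2[OF ix(1)] by simp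
      moreover have "nxt i \<in> Zn - {j, nxt j}"
        using i nxt_nxt_ne[OF j] nxt_ne[OF nxt_in[OF j]] nxt_in[OF ix(1)] by auto
      ultimately show ?thesis unfolding far_arcs_def arc_def using b1R by blast
    next
      case 3
      then have "c \<in> arc_interior (nxt j)" unfolding arc_interior_def using ix i by auto
      then show ?thesis using miss c by blast
    qed
  qed
qed

text \<open>The image of R cannot be split into a part of arc j containing interior points and a
  closed remainder B touching it in a single endpoint: folding B onto that endpoint would
  give a non-constant map of R into arc j that differs from the embedding.\<close>
lemma no_fold_onto_arc:
  assumes f: "continuous_map (top_of_set R) Y f" and j: "j \<in> Zn"
    and B: "closedin Y B" and cover: "f`R \<subseteq> arc j \<union> B"
    and overlap: "\<And>c. c \<in> f`R \<Longrightarrow> c \<in> arc j \<Longrightarrow> c \<in> B \<Longrightarrow> c = u"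
    and u: "u \<in> f`R" "u = pt j b1 \<or> u = pt j b2"
    and p: "p \<in> f`R" "p \<in> arc_interior j" and y: "y \<in> f`R" "y \<notin> arc j"
  shows False
proof -
  let ?fold = "\<lambda>c. if c \<in> arc j then c else u"
  have fR: "f`R \<subseteq> topspace Y" using f by (auto simp: continuous_map_def)
  have uC: "u \<in> arc j" using u b1R b2R unfolding arc_def by auto
  have "continuous_map (subtopology Y (f`R)) Y ?fold"
    by (rule continuous_map_collapse_closed[OF closedin_arc[OF j] B cover fR overlap]) (use u fR in auto)
  moreover have "continuous_map (top_of_set R) (subtopology Y (f`R)) f"
    using f by (intro continuous_map_into_subtopology) (auto simp: Pi_iff)
  ultimately have g: "continuous_map (top_of_set R) Y (?fold \<circ> f)"
    using continuous_map_compose by blast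
  have gR: "(?fold \<circ> f) ` R \<subseteq> pt j ` R" using uC unfolding arc_def by auto
  have inj: "inj_on (pt j) R" using pt_inj[OF j] by (auto simp: inj_on_def)
  obtain a b c where abc: "a \<in> R" "p = f a" "b \<in> R" "y = f b" "c \<in> R" "u = f c" using p y u by auto
  have "(?fold \<circ> f) a \<noteq> (?fold \<circ> f) b"
    using abc p y arc_interior_not_endpoint[OF j p(2)] u(2) arc_interior_subset by auto
  from de_Groot_map_into_copy[OF dG Hausdorff_space_Y continuous_map_pt[OF j] inj g gR abc(1,3) this]
  have "\<forall>t\<in>R. ?fold (f t) = pt j t" by simp
  then have "pt j b = pt j c" using abc y uC by metis
  then have "b = c" using pt_inj[OF j abc(3,5)] by simp
  then show False using abc y uC by simp
qed

definition spills :: "(int \<times> 'a) set set \<Rightarrow> int \<Rightarrow> bool" where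
  "spills K j \<longleftrightarrow> K \<inter> arc_interior j \<noteq> {} \<and> \<not> K \<subseteq> arc j"

text \<open>If the image spills out of arc j, it contains both endpoints of arc j; otherwise
  connectedness or \<open>no_fold_onto_arc\<close> (with B the other arcs) is violated.\<close>
lemma spills_endpoint:
  assumes f: "continuous_map (top_of_set R) Y f" and j: "j \<in> Zn" and sp: "spills (f`R) j"
    and uu: "{u, u'} = {pt j b1, pt j b2}"
  shows "u \<in> f`R"
proof (rule ccontr)
  assume u: "u \<notin> f`R"
  obtain p y where p: "p \<in> f`R" "p \<in> arc_interior j" and y: "y \<in> f`R" "y \<notin> arc j"
    using sp unfolding spills_def by auto
  have uu': "(u = pt j b1 \<and> u' = pt j b2) \<or> (u = pt j b2 \<and> u' = pt j b1)"
    using uu by (simp add: doubleton_eq_iff)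
  have cover: "f`R \<subseteq> arc j \<union> other_arcs j"
    using f Union_arc unfolding other_arcs_def by (auto simp: continuous_map_def)
  show False
  proof (cases "u' \<in> f`R")
    case True
    show False
    proof (rule no_fold_onto_arc[OF f j _ cover _ True _ p y])
      show "closedin Y (other_arcs j)" unfolding other_arcs_def by (rule closedin_Union_arcs) auto
      show "c = u'" if "c \<in> f`R" "c \<in> arc j" "c \<in> other_arcs j" for c
        using arc_inter_other_arcs[OF j] that u uu' by blast
    qed (use uu' in blast)
  next
    case False
    have "arc j \<inter> other_arcs j \<inter> f`R = {}" using arc_inter_other_arcs[OF j] u False uu' by blast
    moreover have "arc j \<inter> f`R \<noteq> {}" using p arc_interior_subset by auto
    moreover have "other_arcs j \<inter> f`R \<noteq> {}" using y cover by auto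
    moreover have "connectedin Y (f`R)"
      using connectedin_continuous_map_image[OF f] R_connected_space connectedin_topspace
      by (metis topspace_euclidean_subtopology)
    ultimately show False using closedin_arc[OF j] closedin_Union_arcs[of "Zn - {j}"] cover
      unfolding connectedin_closedin other_arcs_def by blast
  qed
qed

lemma spills_endpoints:
  assumes "continuous_map (top_of_set R) Y f" "j \<in> Zn" "spills (f`R) j"
  shows "pt j b1 \<in> f`R" "pt j b2 \<in> f`R"
  using spills_endpoint[OF assms, of "pt j b1" "pt j b2"] spills_endpoint[OF assms, of "pt j b2" "pt j b1"]
  by auto

text \<open>Spilling propagates around the cycle: if the image avoided the interior of arc \<open>j+1\<close>,
  the far arcs would meet arc j only in \<open>[j,b\<^sub>1]\<close>, contradicting \<open>no_fold_onto_arc\<close>.\<close>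
lemma spills_nxt:
  assumes f: "continuous_map (top_of_set R) Y f" and j: "j \<in> Zn" and sp: "spills (f`R) j"
  shows "spills (f`R) (nxt j)"
proof -
  obtain p y where p: "p \<in> f`R" "p \<in> arc_interior j" and y: "y \<in> f`R" "y \<notin> arc j"
    using sp unfolding spills_def by auto
  have meets: "f`R \<inter> arc_interior (nxt j) \<noteq> {}"
  proof
    assume miss: "f`R \<inter> arc_interior (nxt j) = {}"
    have "f`R \<subseteq> topspace Y" using f by (auto simp: continuous_map_def)
    from subset_arc_far_arcs[OF j this miss] have cover: "f`R \<subseteq> arc j \<union> far_arcs j" .
    show False
    proof (rule no_fold_onto_arc[OF f j _ cover _ spills_endpoints(1)[OF f j sp] _ p y])
      show "closedin Y (far_arcs j)" unfolding far_arcs_def by (rule closedin_Union_arcs) auto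
      show "c = pt j b1" if "c \<in> f`R" "c \<in> arc j" "c \<in> far_arcs j" for c
        using arc_inter_far_arcs[OF j] that by blast
    qed simp
  qed
  moreover have "\<not> f`R \<subseteq> arc (nxt j)"
    using arc_interior_disjoint[OF j nxt_in[OF j] nxt_ne[OF j]] p by auto
  ultimately show ?thesis unfolding spills_def by auto
qed

lemma spills_everywhere:
  assumes f: "continuous_map (top_of_set R) Y f" and j: "j \<in> Zn" and sp: "spills (f`R) j"
    and i: "i \<in> Zn"
  shows "spills (f`R) i"
proof -
  have "spills (f`R) ((j + int m) mod int n)" for m
  proof (induction m)
    case 0 then show ?case using sp j by (simp add: mod_pos_pos_trivial)
  next
    case (Suc m)
    have "(j + int m) mod int n \<in> Zn" using n2 by auto
    moreover have "nxt ((j + int m) mod int n) = (j + int (Suc m)) mod int n"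
      unfolding mod_add_left_eq by (simp add: algebra_simps)
    ultimately show ?case using spills_nxt[OF f _ Suc.IH] by metis
  qed
  moreover have "(j + int (nat ((i - j) mod int n))) mod int n = i"
    using i n2 by (simp add: mod_add_right_eq)
  ultimately show ?thesis by metis
qed

lemma image_arc_or_all_vertices:
  assumes f: "continuous_map (top_of_set R) Y f" and inj: "inj_on f R"
  shows "(\<exists>j\<in>Zn. \<forall>t\<in>R. f t = pt j t) \<or> (\<forall>i\<in>Zn. pt i b2 \<in> f`R)"
proof -
  have fR: "f`R \<subseteq> topspace Y" using f by (auto simp: continuous_map_def)
  text \<open>Being infinite, the image is not contained in the finite set of vertices.\<close>
  have "\<exists>j\<in>Zn. f`R \<inter> arc_interior j \<noteq> {}"
  proof (rule ccontr)
    assume "\<not> (\<exists>j\<in>Zn. f`R \<inter> arc_interior j \<noteq> {})"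
    then have miss: "\<And>i. i \<in> Zn \<Longrightarrow> f`R \<inter> arc_interior i = {}" by blast
    have "f`R \<subseteq> (\<lambda>i. pt i b2) ` Zn"
    proof
      fix c assume c: "c \<in> f`R"
      then obtain i x where ix: "i \<in> Zn" "x \<in> R" "c = pt i x" using fR topspace_Y_iff by blast
      then have "x = b1 \<or> x = b2"
        using miss[OF ix(1)] c unfolding arc_interior_def by blast
      then show "c \<in> (\<lambda>i. pt i b2) ` Zn" using endpoint_is_vertex[OF ix(1)] ix(3) by blast
    qed
    then have "finite (f`R)" by (rule finite_subset) auto
    then show False using de_Groot_infinite[OF dG] inj finite_imageD by blast
  qed
  then obtain j where j: "j \<in> Zn" and p: "f`R \<inter> arc_interior j \<noteq> {}" by blast
  show ?thesis
  proof (cases "f`R \<subseteq> arc j")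
    case True
    have "f b1 \<noteq> f b2" using inj b1R b2R b12 by (auto simp: inj_on_def)
    moreover have "inj_on (pt j) R" using pt_inj[OF j] by (auto simp: inj_on_def)
    ultimately have "\<forall>t\<in>R. f t = pt j t"
      using de_Groot_map_into_copy[OF dG Hausdorff_space_Y continuous_map_pt[OF j] _ f _ b1R b2R]
        True unfolding arc_def by blast
    then show ?thesis using j by blast
  next
    case False
    then have "spills (f`R) j" using p unfolding spills_def by auto
    then show ?thesis using spills_everywhere[OF f j] spills_endpoints(2)[OF f] by blast
  qed
qed

lemma image_two_vertices:
  assumes f: "continuous_map (top_of_set R) Y f" and inj: "inj_on f R"
  obtains i i' where "i \<in> Zn" "i' \<in> Zn" "i \<noteq> i'" "pt i b2 \<in> f`R" "pt i' b2 \<in> f`R"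
proof -
  consider j where "j \<in> Zn" "\<forall>t\<in>R. f t = pt j t" | "\<forall>i\<in>Zn. pt i b2 \<in> f`R"
    using image_arc_or_all_vertices[OF f inj] by blast
  then show ?thesis
  proof cases
    case (1 j)
    let ?i = "(j - 1) mod int n"
    have "?i \<in> Zn" "?i \<noteq> j" using n2 nxt_iff_pred[OF 1(1), of ?i] nxt_ne[of ?i] by auto
    moreover have "pt j b2 \<in> f`R" "pt ?i b2 \<in> f`R"
      using 1 b1R b2R pt_b1[OF 1(1)] by (metis image_eqI)+
    ultimately show ?thesis using that 1(1) by blast
  next
    case 2
    then show ?thesis using that[of 0 1] n2 by auto
  qed
qed

subsection \<open>Shifts are homeomorphisms\<close>

lemma pt_explicit:
  assumes k: "k \<in> Zn" and x: "x \<in> R"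
  shows "pt k x = {(k,x)} \<union> (if x = b2 then {(nxt k, b1)} else {})
                 \<union> (if x = b1 then {((k - 1) mod int n, b2)} else {})" (is "_ = ?rhs")
proof (intro equalityI subsetI)
  fix q assume "q \<in> pt k x"
  then have "((k,x),q) \<in> rh" unfolding pt_def by simp
  then have qS: "q \<in> S" and
    "q = (k,x) \<or> (x = b2 \<and> q = (nxt k, b1)) \<or> (\<exists>k'. q = (k',b2) \<and> nxt k' = k \<and> x = b1)"
    unfolding mem_rh by auto
  then show "q \<in> ?rhs"
  proof (elim disjE exE conjE)
    fix k' assume q: "q = (k',b2)" and kk: "nxt k' = k" and "x = b1"
    moreover have "k' \<in> Zn" using qS q by auto
    ultimately show "q \<in> ?rhs" using nxt_iff_pred[OF k] kk by simp
  qed auto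
next
  have pred: "(k - 1) mod int n \<in> Zn" "nxt ((k - 1) mod int n) = k"
    using n2 nxt_iff_pred[OF k, of "(k - 1) mod int n"] by auto
  fix q assume "q \<in> ?rhs"
  then consider "q = (k,x)" | "x = b2" "q = (nxt k, b1)" | "x = b1" "q = ((k - 1) mod int n, b2)"
    by (auto split: if_splits)
  then have "((k,x),q) \<in> rh"
    by cases (use k x b1R b2R nxt_in[OF k] pred in \<open>auto simp: mem_rh\<close>)
  then show "q \<in> pt k x" unfolding pt_def by simp
qed

lemma shift_pt: assumes k: "k \<in> Zn" and x: "x \<in> R"
  shows "shift m (pt k x) = pt ((m + k) mod int n) x"
proof -
  have mk: "(m + k) mod int n \<in> Zn" using n2 by auto
  have "(m + nxt k) mod int n = nxt ((m + k) mod int n)"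
    by (metis add.assoc mod_add_left_eq mod_add_right_eq)
  moreover have "(m + (k - 1) mod int n) mod int n = ((m + k) mod int n - 1) mod int n"
    by (metis add_diff_eq mod_add_right_eq mod_diff_left_eq)
  moreover have "shift m (pt k x) = (\<lambda>(k,x). ((m + k) mod int n, x)) ` pt k x"
    unfolding Y_shift_def using pt_in[OF assms] by auto
  ultimately show ?thesis unfolding pt_explicit[OF assms] pt_explicit[OF mk x] by auto
qed

lemma shift_extensional: "shift m \<in> extensional (topspace Y)"
  unfolding Y_shift_def by simp

lemma continuous_map_shift: "continuous_map Y Y (shift m)"
proof (rule continuous_map_from_Y)
  fix k assume k: "k \<in> Zn"
  have "continuous_map (top_of_set R) Y (pt ((m + k) mod int n))"
    using continuous_map_pt n2 by simp
  then show "continuous_map (top_of_set R) Y (\<lambda>x. shift m (pt k x))"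
    by (rule continuous_map_eq) (simp add: shift_pt[OF k])
qed

lemma shift_shift: "k \<in> Zn \<Longrightarrow> x \<in> R \<Longrightarrow> shift a (shift b (pt k x)) = pt ((a + b + k) mod int n) x"
  using n2 by (simp add: shift_pt mod_add_right_eq add.assoc)

lemma shift_in_carrier: "shift m \<in> carrier (homeo_group Y)"
proof -
  have "homeomorphic_maps Y Y (shift m) (shift (-m))"
    unfolding homeomorphic_maps_def
    using continuous_map_shift topspace_Y_iff shift_shift by (auto simp: mod_pos_pos_trivial)
  then have "homeomorphic_map Y Y (shift m)" using homeomorphic_map_maps by blast
  then show ?thesis by (simp add: homeo_group_def shift_extensional)
qed

lemma shift_mult:
  "shift ((a + b) mod int n) = compose (topspace Y) (shift a) (shift b)"
proof
  fix c show "shift ((a + b) mod int n) c = compose (topspace Y) (shift a) (shift b) c"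
  proof (cases "c \<in> topspace Y")
    case True
    then obtain k x where kx: "k \<in> Zn" "x \<in> R" "c = pt k x" using topspace_Y_iff by blast
    have "shift ((a + b) mod int n) c = pt (((a + b) mod int n + k) mod int n) x"
      using shift_pt kx by simp
    also have "\<dots> = shift a (shift b c)" using shift_shift kx by (simp add: mod_add_left_eq)
    finally show ?thesis using True by (simp add: compose_def)
  next
    case False
    then show ?thesis using shift_extensional unfolding extensional_def compose_def by simp
  qed
qed

lemma inj_shift: "inj_on shift Zn"
proof
  fix a b assume ab: "a \<in> Zn" "b \<in> Zn" "shift a = shift b"
  obtain z where z: "z \<in> R" "z \<noteq> b1" "z \<noteq> b2"
    using de_Groot_infinite[OF dG] by (metis finite.emptyI finite_insert finite_subset insertCI subsetI)
  have "0 \<in> Zn" using n2 by simp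
  then have "pt a z = pt b z" using shift_pt[of 0 z] ab z by (metis add.right_neutral mod_pos_pos_trivial
        atLeastLessThan_iff)
  then show "a = b" using pt_eq_iff[OF ab(1,2) z(1) z(1)] z by simp
qed

subsection \<open>Homeomorphisms of \<open>Y\<^sub>n\<close> are shifts\<close>

text \<open>A homeomorphism maps every arc onto an arc, preserving the parametrisation.  Otherwise
  the image of arc k would contain all vertices, while the image of the adjacent arc \<open>k+1\<close>
  contains two vertices; but the two images share only the image of the common vertex.\<close>
lemma homeo_maps_arc:
  assumes h: "homeomorphic_map Y Y h" and k: "k \<in> Zn"
  shows "\<exists>j\<in>Zn. \<forall>t\<in>R. h (pt k t) = pt j t"
proof (rule ccontr)
  assume not_arc: "\<not> ?thesis"
  have hinj: "inj_on h (topspace Y)" using h by (rule homeomorphic_imp_injective_map)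
  have cont: "continuous_map (top_of_set R) Y (\<lambda>t. h (pt i t))" if "i \<in> Zn" for i
    using continuous_map_compose[OF continuous_map_pt[OF that] homeomorphic_imp_continuous_map[OF h]]
    by (simp add: o_def)
  have inj: "inj_on (\<lambda>t. h (pt i t)) R" if i: "i \<in> Zn" for i
    using hinj pt_in[OF i] pt_inj[OF i] unfolding inj_on_def by metis
  have common: "z = h (pt k b2)"
    if z: "z \<in> (\<lambda>t. h (pt k t))`R" "z \<in> (\<lambda>t. h (pt (nxt k) t))`R" for z
  proof -
    obtain s s' where s: "s \<in> R" "s' \<in> R" "z = h (pt k s)" "z = h (pt (nxt k) s')" using z by auto
    then have "pt k s = pt (nxt k) s'"
      using hinj pt_in[OF k s(1)] pt_in[OF nxt_in[OF k] s(2)] by (metis inj_onD)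
    then have "s = b2" using pt_eq_iff[OF k nxt_in[OF k] s(1,2)] nxt_ne[OF k] nxt_nxt_ne[OF k] by auto
    then show ?thesis using s by simp
  qed
  have all: "\<forall>i\<in>Zn. pt i b2 \<in> (\<lambda>t. h (pt k t))`R"
    using image_arc_or_all_vertices[OF cont[OF k] inj[OF k]] not_arc by blast
  obtain i i' where "i \<in> Zn" "i' \<in> Zn" "i \<noteq> i'"
    "pt i b2 \<in> (\<lambda>t. h (pt (nxt k) t))`R" "pt i' b2 \<in> (\<lambda>t. h (pt (nxt k) t))`R"
    using image_two_vertices[OF cont inj] nxt_in[OF k] by blast
  then show False using all common vertex_inj by metis
qed

text \<open>A homeomorphism permutes the arcs by an index map commuting with the successor, since
  it respects the vertex identifications \<open>[k,b\<^sub>2] = [k+1,b\<^sub>1]\<close>.\<close>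
lemma homeo_arc_permutation:
  assumes h: "homeomorphic_map Y Y h"
  obtains \<sigma> where "\<And>k. k \<in> Zn \<Longrightarrow> \<sigma> k \<in> Zn"
    and "\<And>k t. k \<in> Zn \<Longrightarrow> t \<in> R \<Longrightarrow> h (pt k t) = pt (\<sigma> k) t"
    and "\<And>k. k \<in> Zn \<Longrightarrow> \<sigma> (nxt k) = nxt (\<sigma> k)"
proof -
  define \<sigma> where "\<sigma> k = (SOME j. j \<in> Zn \<and> (\<forall>t\<in>R. h (pt k t) = pt j t))" for k
  have \<sigma>: "\<sigma> k \<in> Zn \<and> (\<forall>t\<in>R. h (pt k t) = pt (\<sigma> k) t)" if k: "k \<in> Zn" for k
  proof -
    have "\<exists>j. j \<in> Zn \<and> (\<forall>t\<in>R. h (pt k t) = pt j t)" using homeo_maps_arc[OF h k] by blast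
    then show ?thesis unfolding \<sigma>_def by (rule someI_ex)
  qed
  moreover have "\<sigma> (nxt k) = nxt (\<sigma> k)" if k: "k \<in> Zn" for k
  proof -
    have "pt (\<sigma> k) b2 = h (pt k b2)" using \<sigma>[OF k] b2R by simp
    also have "\<dots> = h (pt (nxt k) b1)" using pt_b2[OF k] by simp
    also have "\<dots> = pt (\<sigma> (nxt k)) b1" using \<sigma>[OF nxt_in[OF k]] b1R by simp
    finally show ?thesis
      using pt_eq_iff[of "\<sigma> k" "\<sigma> (nxt k)" b2 b1] \<sigma>[OF k] \<sigma>[OF nxt_in[OF k]] b1R b2R b12 by auto
  qed
  ultimately show ?thesis using that by blast
qed

lemma homeo_is_shift:
  assumes "h \<in> carrier (homeo_group Y)"
  shows "\<exists>m\<in>Zn. h = shift m"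
proof -
  have h: "homeomorphic_map Y Y h" and hext: "h \<in> extensional (topspace Y)"
    using assms unfolding homeo_group_def by auto
  obtain \<sigma> where \<sigma>: "\<And>k. k \<in> Zn \<Longrightarrow> \<sigma> k \<in> Zn"
    and arcs: "\<And>k t. k \<in> Zn \<Longrightarrow> t \<in> R \<Longrightarrow> h (pt k t) = pt (\<sigma> k) t"
    and comm: "\<And>k. k \<in> Zn \<Longrightarrow> \<sigma> (nxt k) = nxt (\<sigma> k)"
    using homeo_arc_permutation[OF h] by blast
  have "h c = shift (\<sigma> 0) c" for c
  proof (cases "c \<in> topspace Y")
    case True
    then obtain k x where kx: "k \<in> Zn" "x \<in> R" "c = pt k x" using topspace_Y_iff by blast
    then show ?thesis
      using arcs[OF kx(1,2)] commutes_nxt_imp_translation[of \<sigma>, OF \<sigma> comm kx(1)] shift_pt by simp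
  next
    case False
    then show ?thesis using hext shift_extensional unfolding extensional_def by simp
  qed
  moreover have "\<sigma> 0 \<in> Zn" using \<sigma>[of 0] n2 by simp
  ultimately show ?thesis by blast
qed

lemma shift_iso: "shift \<in> iso (integer_mod_group n) (homeo_group Y)"
proof -
  have carrier: "carrier (integer_mod_group n) = Zn" using n2 by (simp add: integer_mod_group_def)
  have mult: "x \<otimes>\<^bsub>integer_mod_group n\<^esub> y = (x + y) mod int n" for x y
    using n2 by (simp add: integer_mod_group_def)
  have "shift \<in> hom (integer_mod_group n) (homeo_group Y)"
    unfolding hom_def carrier mult using shift_in_carrier shift_mult
    by (simp add: homeo_group_def Pi_iff)
  moreover have "shift ` Zn = carrier (homeo_group Y)"
    using shift_in_carrier homeo_is_shift by blast
  ultimately show ?thesis unfolding iso_def using inj_shift carrier by (simp add: bij_betw_def)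
qed

end

theorem mainTheorem2:
  fixes R :: "'a::metric_space set" and b1 b2 :: 'a and n :: nat
  assumes "n > 2"
    and "de_Groot_continuum R"
    and "b1 \<in> R" and "b2 \<in> R" and "b1 \<noteq> b2"
  shows "continuum_space (Y_space n R b1 b2) \<and>
         Y_shift n R b1 b2 \<in> iso (integer_mod_group n) (homeo_group (Y_space n R b1 b2))"
proof -
  interpret cycle_space n R b1 b2 using assms by unfold_locales
  show ?thesis using continuum_space_Y shift_iso by simp
qed

end
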